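(* Let $\varrho$ be a proximate order, $\sigma,\tau>0$, $f\in A_{\varrho,\sigma}$ and $g\in A_{\varrho,\tau}$. Then $f\star_Lg\in A_{\varrho,\sigma+\tau}$ and $$\|f\star_Lg\|_{\varrho,\sigma+\tau}\le 2^{\frac{n+4}{2}}\|f\|_{\varrho,\sigma}\|g\|_{\varrho,\tau},$$ where $n$ is the number of imaginary units of the Clifford algebra $\mathbb{R}_n$.
   Context: $\mathbb{R}_n$ is the real Clifford algebra generated by $e_1,\dots,e_n$ with $e_ie_j=-e_je_i$ ($i\ne j$), $e_i^2=-1$, with Euclidean norm $|a|^2=\sum_Aa_A^2$ for $a=\sum_Aa_Ae_A$. Paravectors $x=x_0+\sum x_\ell e_\ell$ are identified with $\mathbb{R}^{n+1}$; $\mathbb{S}=\{\sum x_\ell e_\ell:\sum x_\ell^2=1\}$. $\mathcal{SM}_L(\mathbb{R}^{n+1})$ is the set of entire left slice monogenic functions: $f(u+jv)=f_0(u,v)+jf_1(u,v)$ for all $u,v\in\mathbb{R}$, $j\in\mathbb{S}$, with $f_0,f_1:\mathbb{R}^2\to\mathbb{R}_n$ continuously differentiable, $f_0$ even and $f_1$ odd in $v$, $\partial_uf_0=\partial_vf_1$, $\partial_vf_0=-\partial_uf_1$. The star product is $f\star_Lg=f_0g_0-f_1g_1+j(f_1g_0+f_0g_1)$. A proximate order is a differentiable $\varrho:[0,\infty)\to[0,\infty)$ with $\lim_{r\to\infty}\varrho(r)=\rho>0$ and $\lim_{r\to\infty}\varrho'(r)r\ln r=0$. $A_{\varrho,\sigma}=\{f\in\mathcal{SM}_L(\mathbb{R}^{n+1}):\|f\|_{\varrho,\sigma}:=\sup_x|f(x)|e^{-\sigma|x|^{\varrho(|x|)}}<\infty\}$.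 *)

theory Defs
  imports "HOL-Analysis.Analysis"
begin

text \<open>Real Clifford algebra R_n with generators e_1,...,e_n (e_i^2 = -1).
  An element a = sum_A a_A e_A is represented by its coefficient function
  nat set => real; elements of R_n are those whose coefficients vanish
  outside the subsets of {1..n}.\<close>

type_synonym cl = "nat set \<Rightarrow> real"

definition cl :: "nat \<Rightarrow> cl set" where
  "cl n = {a. \<forall>A. \<not> A \<subseteq> {1..n} \<longrightarrow> a A = 0}"

text \<open>Sign in e_A e_B = sign * e_(A symdiff B), for e_i e_j = - e_j e_i, e_i^2 = -1.\<close>
definition cl_sign :: "nat set \<Rightarrow> nat set \<Rightarrow> real" where
  "cl_sign A B = (-1) ^ (card {(a, b). a \<in> A \<and> b \<in> B \<and> b < a} + card (A \<inter> B))"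

definition cl_mult :: "nat \<Rightarrow> cl \<Rightarrow> cl \<Rightarrow> cl" where
  "cl_mult n a b = (\<lambda>C. \<Sum>A\<in>Pow {1..n}. \<Sum>B\<in>Pow {1..n}.
      if (A - B) \<union> (B - A) = C then cl_sign A B * a A * b B else 0)"

definition cl_add :: "cl \<Rightarrow> cl \<Rightarrow> cl" where
  "cl_add a b = (\<lambda>C. a C + b C)"

definition cl_sub :: "cl \<Rightarrow> cl \<Rightarrow> cl" where
  "cl_sub a b = (\<lambda>C. a C - b C)"

definition cl_scale :: "real \<Rightarrow> cl \<Rightarrow> cl" where
  "cl_scale r a = (\<lambda>C. r * a C)"

definition cl_scalar :: "real \<Rightarrow> cl" where
  "cl_scalar s = (\<lambda>C. if C = {} then s else 0)"

definition cl_unit :: "nat \<Rightarrow> cl" where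
  "cl_unit i = (\<lambda>C. if C = {i} then 1 else 0)"

definition clnorm :: "nat \<Rightarrow> cl \<Rightarrow> real" where
  "clnorm n a = sqrt (\<Sum>A\<in>Pow {1..n}. (a A)\<^sup>2)"

text \<open>Paravectors x_0 + sum x_l e_l (identified with R^(n+1)).\<close>
definition paravec :: "nat \<Rightarrow> cl set" where
  "paravec n = {x \<in> cl n. \<forall>A. 2 \<le> card A \<longrightarrow> x A = 0}"

definition imag_sphere :: "nat \<Rightarrow> cl set" where
  "imag_sphere n = {j \<in> paravec n. j {} = 0 \<and> (\<Sum>l=1..n. (j {l})\<^sup>2) = 1}"

definition slice_decomp :: "nat \<Rightarrow> (cl \<Rightarrow> cl) \<Rightarrow> (real \<Rightarrow> real \<Rightarrow> cl) \<Rightarrow> (real \<Rightarrow> real \<Rightarrow> cl) \<Rightarrow> bool" where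
  "slice_decomp n f f0 f1 \<longleftrightarrow>
     (\<forall>u v. f0 u v \<in> cl n \<and> f1 u v \<in> cl n) \<and>
     (\<forall>u v A. f0 u (-v) A = f0 u v A \<and> f1 u (-v) A = - f1 u v A) \<and>
     (\<forall>u v j. j \<in> imag_sphere n \<longrightarrow>
        f (cl_add (cl_scalar u) (cl_scale v j)) = cl_add (f0 u v) (cl_mult n j (f1 u v))) \<and>
     (\<exists>p0u p0v p1u p1v :: real \<Rightarrow> real \<Rightarrow> cl. \<forall>A.
        (\<forall>u v. ((\<lambda>t. f0 t v A) has_real_derivative p0u u v A) (at u) \<and>
               ((\<lambda>t. f0 u t A) has_real_derivative p0v u v A) (at v) \<and>
               ((\<lambda>t. f1 t v A) has_real_derivative p1u u v A) (at u) \<and>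
               ((\<lambda>t. f1 u t A) has_real_derivative p1v u v A) (at v)) \<and>
        continuous_on UNIV (\<lambda>z. p0u (fst z) (snd z) A) \<and>
        continuous_on UNIV (\<lambda>z. p0v (fst z) (snd z) A) \<and>
        continuous_on UNIV (\<lambda>z. p1u (fst z) (snd z) A) \<and>
        continuous_on UNIV (\<lambda>z. p1v (fst z) (snd z) A) \<and>
        (\<forall>u v. p0u u v A = p1v u v A \<and> p0v u v A = - p1u u v A))"

definition SM_L :: "nat \<Rightarrow> (cl \<Rightarrow> cl) set" where
  "SM_L n = {f. \<exists>f0 f1. slice_decomp n f f0 f1}"

text \<open>Left star product f *_L g (u+jv) = f0g0 - f1g1 + j(f1g0 + f0g1), with
  x = u + jv, u = x_0, v = |x - x_0|, j = (x - x_0)/v (j = e_1 if v = 0).\<close>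
definition star_L :: "nat \<Rightarrow> (cl \<Rightarrow> cl) \<Rightarrow> (cl \<Rightarrow> cl) \<Rightarrow> cl \<Rightarrow> cl" where
  "star_L n f g x =
    (let (f0, f1) = (SOME p. slice_decomp n f (fst p) (snd p));
         (g0, g1) = (SOME p. slice_decomp n g (fst p) (snd p));
         u = x {};
         w = (\<lambda>C. if C = {} then 0 else x C);
         v = clnorm n w;
         j = (if v = 0 then cl_unit 1 else cl_scale (1 / v) w)
     in cl_add (cl_sub (cl_mult n (f0 u v) (g0 u v)) (cl_mult n (f1 u v) (g1 u v)))
               (cl_mult n j (cl_add (cl_mult n (f1 u v) (g0 u v)) (cl_mult n (f0 u v) (g1 u v)))))"

definition proximate_order :: "(real \<Rightarrow> real) \<Rightarrow> bool" where
  "proximate_order \<rho> \<longleftrightarrow>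
     (\<forall>r\<ge>0. \<rho> differentiable (at r within {0..})) \<and>
     (\<forall>r\<ge>0. \<rho> r \<ge> 0) \<and>
     (\<exists>\<rho>0>0. (\<rho> \<longlongrightarrow> \<rho>0) at_top) \<and>
     ((\<lambda>r. deriv \<rho> r * r * ln r) \<longlongrightarrow> 0) at_top"

definition A_weight :: "nat \<Rightarrow> (real \<Rightarrow> real) \<Rightarrow> real \<Rightarrow> (cl \<Rightarrow> cl) \<Rightarrow> cl \<Rightarrow> real" where
  "A_weight n \<rho> \<sigma> f x = clnorm n (f x) * exp (- \<sigma> * clnorm n x powr \<rho> (clnorm n x))"

definition A_space :: "nat \<Rightarrow> (real \<Rightarrow> real) \<Rightarrow> real \<Rightarrow> (cl \<Rightarrow> cl) set" where
  "A_space n \<rho> \<sigma> = {f \<in> SM_L n. bdd_above (A_weight n \<rho> \<sigma> f ` paravec n)}"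

definition A_norm :: "nat \<Rightarrow> (real \<Rightarrow> real) \<Rightarrow> real \<Rightarrow> (cl \<Rightarrow> cl) \<Rightarrow> real" where
  "A_norm n \<rho> \<sigma> f = (SUP x\<in>paravec n. A_weight n \<rho> \<sigma> f x)"

end

theory Submission
  imports Defs
begin

text \<open>Write a paravector as \<open>x = u + v j\<close> with \<open>j \<in> \<SS>\<close>, and let \<open>x\<^sup>c = u - v j\<close> be its
  conjugate, so \<open>|x\<^sup>c| = |x|\<close>. Evenness and oddness of the slice components give
  \<open>f\<^sub>0(u,v) = (f(x) + f(x\<^sup>c))/2\<close> and \<open>j f\<^sub>1(u,v) = (f(x) - f(x\<^sup>c))/2\<close>; since left multiplication
  by a unit \<open>j\<close> is an isometry of \<open>\<real>\<^sub>n\<close>, both components are bounded by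
  \<open>\<parallel>f\<parallel> e\<^bsup>\<sigma>|x|\<^sup>\<rho>\<^esup>\<close>, and likewise for \<open>g\<close>. Combined with \<open>|a b| \<le> 2\<^bsup>n/2\<^esup> |a| |b|\<close> this gives
  \<open>|f \<star> g (x)| \<le> 2\<^bsup>n/2\<^esup> (|f\<^sub>0| + |f\<^sub>1|)(|g\<^sub>0| + |g\<^sub>1|) \<le> 2\<^bsup>(n+4)/2\<^esup> \<parallel>f\<parallel> \<parallel>g\<parallel> e\<^bsup>(\<sigma>+\<tau>)|x|\<^sup>\<rho>\<^esup>\<close>.
  That \<open>f \<star> g\<close> is again slice monogenic is the product rule for the Cauchy-Riemann
  system.\<close>

section \<open>Norm of the Clifford product\<close>

lemma sum_Pow_sym_diff:
  assumes "finite I" "C \<subseteq> I"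
  shows "(\<Sum>A\<in>Pow I. h (sym_diff A C)) = (\<Sum>A\<in>Pow I. h A)"
  by (rule sum.reindex_bij_witness[where i="\<lambda>A. sym_diff A C" and j="\<lambda>A. sym_diff A C"])
     (use assms in auto)

lemma cl_mult_expand:
  assumes "C \<subseteq> {1..n}"
  shows "cl_mult n a b C = (\<Sum>A\<in>Pow {1..n}. cl_sign A (sym_diff A C) * a A * b (sym_diff A C))"
  unfolding cl_mult_def
proof (rule sum.cong[OF refl])
  fix A assume "A \<in> Pow {1..n}"
  then have "sym_diff A C \<in> Pow {1..n}" using assms by auto
  moreover have "sym_diff A B = C \<longleftrightarrow> B = sym_diff A C" for B by blast
  ultimately show "(\<Sum>B\<in>Pow {1..n}. if sym_diff A B = C then cl_sign A B * a A * b B else 0) =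
      cl_sign A (sym_diff A C) * a A * b (sym_diff A C)"
    by simp
qed

lemma cl_mult_outside: "\<not> C \<subseteq> {1..n} \<Longrightarrow> cl_mult n a b C = 0"
  unfolding cl_mult_def by (intro sum.neutral ballI) auto

lemma cl_mult_uminus_left: "cl_mult n (\<lambda>A. - a A) b C = - cl_mult n a b C"
  unfolding cl_mult_def by (simp flip: sum_negf add: if_distrib cong: if_cong)

lemma cl_mult_uminus_right: "cl_mult n a (\<lambda>B. - b B) C = - cl_mult n a b C"
  unfolding cl_mult_def by (simp flip: sum_negf add: if_distrib cong: if_cong)

lemma cl_mult_zero_right: "cl_mult n a (\<lambda>B. 0) C = 0"
  unfolding cl_mult_def by (intro sum.neutral ballI) (simp add: sum.neutral)

lemma clnorm_eq_L2_set: "clnorm n a = L2_set a (Pow {1..n})"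
  by (simp add: clnorm_def L2_set_def)

lemma clnorm_nonneg: "clnorm n a \<ge> 0"
  by (simp add: clnorm_def sum_nonneg)

lemma clnorm_power2: "(clnorm n a)\<^sup>2 = (\<Sum>C\<in>Pow {1..n}. (a C)\<^sup>2)"
  unfolding clnorm_def by (simp add: sum_nonneg)

lemma clnorm_cl_add_le: "clnorm n (cl_add a b) \<le> clnorm n a + clnorm n b"
  unfolding cl_add_def clnorm_eq_L2_set by (rule L2_set_triangle_ineq)

lemma clnorm_cl_scale: "clnorm n (cl_scale r a) = \<bar>r\<bar> * clnorm n a"
  unfolding clnorm_def cl_scale_def
  by (simp add: power_mult_distrib sum_distrib_left[symmetric] real_sqrt_mult)

lemma clnorm_uminus: "clnorm n (\<lambda>A. - a A) = clnorm n a"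
  unfolding clnorm_def by simp

lemma clnorm_cl_sub_le: "clnorm n (cl_sub a b) \<le> clnorm n a + clnorm n b"
  using clnorm_cl_add_le[of n a "\<lambda>A. - b A"] clnorm_uminus[of n b]
  by (simp add: cl_add_def cl_sub_def)

lemma abs_cl_sign [simp]: "\<bar>cl_sign A B\<bar> = 1"
  unfolding cl_sign_def by simp

lemma abs_cl_mult_le: "\<bar>cl_mult n a b C\<bar> \<le> clnorm n a * clnorm n b"
proof (cases "C \<subseteq> {1..n}")
  case True
  have "\<bar>cl_mult n a b C\<bar> \<le> (\<Sum>A\<in>Pow {1..n}. \<bar>cl_sign A (sym_diff A C) * a A * b (sym_diff A C)\<bar>)"
    unfolding cl_mult_expand[OF True] by (rule sum_abs)
  also have "\<dots> = (\<Sum>A\<in>Pow {1..n}. \<bar>a A\<bar> * \<bar>b (sym_diff A C)\<bar>)"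
    by (simp add: abs_mult)
  also have "\<dots> \<le> L2_set a (Pow {1..n}) * L2_set (\<lambda>A. b (sym_diff A C)) (Pow {1..n})"
    by (rule L2_set_mult_ineq)
  also have "L2_set (\<lambda>A. b (sym_diff A C)) (Pow {1..n}) = L2_set b (Pow {1..n})"
    unfolding L2_set_def using sum_Pow_sym_diff[OF _ True, of "\<lambda>A. (b A)\<^sup>2"] by simp
  finally show ?thesis by (simp add: clnorm_eq_L2_set)
qed (simp add: cl_mult_outside clnorm_nonneg)

lemma clnorm_cl_mult_le: "clnorm n (cl_mult n a b) \<le> 2 powr (real n / 2) * clnorm n a * clnorm n b"
proof (rule power2_le_imp_le)
  have "(clnorm n (cl_mult n a b))\<^sup>2 \<le> (\<Sum>C\<in>Pow {1..n}. (clnorm n a * clnorm n b)\<^sup>2)"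
    unfolding clnorm_power2
    by (rule sum_mono) (simp add: power2_le_iff_abs_le abs_cl_mult_le clnorm_nonneg)
  also have "\<dots> = (2 powr (real n / 2))\<^sup>2 * (clnorm n a * clnorm n b)\<^sup>2"
    by (simp add: card_Pow powr_realpow[symmetric] powr_powr[symmetric] power2_eq_square
                  flip: powr_add)
  finally show "(clnorm n (cl_mult n a b))\<^sup>2 \<le> (2 powr (real n / 2) * clnorm n a * clnorm n b)\<^sup>2"
    by (simp add: power_mult_distrib mult.assoc)
qed (simp add: clnorm_nonneg)

section \<open>Left multiplication by an imaginary unit\<close>

definition unit_sign :: "nat \<Rightarrow> nat set \<Rightarrow> real" where
  "unit_sign l C = (-1) ^ (card {b\<in>C. b < l} + (if l \<in> C then 0 else 1))"

lemma cl_sign_singleton: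
  assumes "finite C"
  shows "cl_sign {l} (sym_diff {l} C) = unit_sign l C"
proof -
  have "{(a, b). a \<in> {l} \<and> b \<in> sym_diff {l} C \<and> b < a} = (\<lambda>b. (l, b)) ` {b\<in>C. b < l}"
    by auto
  then have "card {(a, b). a \<in> {l} \<and> b \<in> sym_diff {l} C \<and> b < a} = card {b\<in>C. b < l}"
    by (simp add: card_image inj_on_def)
  moreover have "card ({l} \<inter> sym_diff {l} C) = (if l \<in> C then 0 else 1)"
    by auto
  ultimately show ?thesis
    unfolding cl_sign_def unit_sign_def by simp
qed

lemma unit_sign_square [simp]: "unit_sign l C * unit_sign l C = 1"
  unfolding unit_sign_def by (simp flip: power_add)

text \<open>The anticommutation rule \<open>e\<^sub>l e\<^sub>m = - e\<^sub>m e\<^sub>l\<close>, read off on coefficients.\<close>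

lemma unit_sign_swap_less:
  assumes "l < m" "finite C"
  shows "unit_sign m (sym_diff C {l, m}) * unit_sign l (sym_diff C {l, m}) =
         - (unit_sign l C * unit_sign m C)"
proof -
  let ?C' = "sym_diff C {l, m}"
  have below_l: "{b \<in> ?C'. b < l} = {b \<in> C. b < l}"
    using assms by auto
  have fin: "finite {b \<in> ?C'. b < m}" "finite {b \<in> C. b < m}"
    using assms by auto
  have flip: "l \<in> ?C' \<longleftrightarrow> l \<notin> C" "m \<in> ?C' \<longleftrightarrow> m \<notin> C"
    using assms by auto
  show ?thesis
  proof (cases "l \<in> C")
    case True
    then have "{b \<in> C. b < m} = insert l {b \<in> ?C'. b < m}" "l \<notin> {b \<in> ?C'. b < m}"
      using assms by auto
    then have "card {b \<in> C. b < m} = Suc (card {b \<in> ?C'. b < m})"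
      using fin by simp
    then show ?thesis
      unfolding unit_sign_def below_l flip using True by (cases "m \<in> C") (simp_all add: power_add)
  next
    case False
    then have "{b \<in> ?C'. b < m} = insert l {b \<in> C. b < m}" "l \<notin> {b \<in> C. b < m}"
      using assms by auto
    then have "card {b \<in> ?C'. b < m} = Suc (card {b \<in> C. b < m})"
      using fin by simp
    then show ?thesis
      unfolding unit_sign_def below_l flip using False by (cases "m \<in> C") (simp_all add: power_add)
  qed
qed

lemma unit_sign_swap:
  assumes "l \<noteq> m" "finite C"
  shows "unit_sign m (sym_diff C {l, m}) * unit_sign l (sym_diff C {l, m}) =
         - (unit_sign l C * unit_sign m C)"
proof (cases "l < m")
  case True
  then show ?thesis using unit_sign_swap_less assms(2) by blast
next
  case False
  then have "m < l" using assms(1) by simp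
  from unit_sign_swap_less[OF this assms(2)] show ?thesis
    by (simp add: insert_commute mult.commute)
qed

lemma sum_Pow_singletons:
  assumes "finite I" "\<And>C. C \<subseteq> I \<Longrightarrow> card C \<noteq> 1 \<Longrightarrow> h C = 0"
  shows "(\<Sum>C\<in>Pow I. h C) = (\<Sum>l\<in>I. h {l})"
proof -
  have "(\<Sum>C\<in>Pow I. h C) = (\<Sum>C\<in>(\<lambda>l. {l}) ` I. h C)"
  proof (rule sum.mono_neutral_right)
    show "\<forall>C\<in>Pow I - (\<lambda>l. {l}) ` I. h C = 0"
      using assms(2) by (auto simp: card_1_singleton_iff)
  qed (use assms(1) in auto)
  also have "\<dots> = (\<Sum>l\<in>I. h {l})"
    by (simp add: sum.reindex)
  finally show ?thesis .
qed

lemma paravec_coeff_eq_0: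
  assumes "x \<in> paravec n" "A \<noteq> {}" "card A \<noteq> 1"
  shows "x A = 0"
proof (cases "finite A")
  case True
  then have "2 \<le> card A" using assms(2,3) by (cases "card A") auto
  then show ?thesis using assms(1) by (simp add: paravec_def)
next
  case False
  then have "\<not> A \<subseteq> {1..n}" using finite_subset by blast
  then show ?thesis using assms(1) by (simp add: paravec_def cl_def)
qed

lemma imag_sphere_coeff_eq_0: "j \<in> imag_sphere n \<Longrightarrow> card A \<noteq> 1 \<Longrightarrow> j A = 0"
  by (cases "A = {}") (auto simp: imag_sphere_def intro: paravec_coeff_eq_0)

lemma clnorm_imag_sphere:
  assumes "j \<in> imag_sphere n"
  shows "clnorm n j = 1"
proof -
  have "(\<Sum>C\<in>Pow {1..n}. (j C)\<^sup>2) = (\<Sum>l\<in>{1..n}. (j {l})\<^sup>2)"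
    by (rule sum_Pow_singletons) (simp_all add: imag_sphere_coeff_eq_0[OF assms])
  then show ?thesis
    using assms by (simp add: clnorm_def imag_sphere_def)
qed

lemma cl_mult_imag_expand:
  assumes j: "j \<in> imag_sphere n" and C: "C \<subseteq> {1..n}"
  shows "cl_mult n j c C = (\<Sum>l\<in>{1..n}. j {l} * unit_sign l C * c (sym_diff {l} C))"
proof -
  have "finite C" using C finite_subset by blast
  have "cl_mult n j c C = (\<Sum>A\<in>Pow {1..n}. cl_sign A (sym_diff A C) * j A * c (sym_diff A C))"
    using C by (rule cl_mult_expand)
  also have "\<dots> = (\<Sum>l\<in>{1..n}. cl_sign {l} (sym_diff {l} C) * j {l} * c (sym_diff {l} C))"
    by (rule sum_Pow_singletons) (simp_all add: imag_sphere_coeff_eq_0[OF j])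
  finally show ?thesis
    by (simp add: cl_sign_singleton[OF \<open>finite C\<close>] mult_ac)
qed

lemma sum_quadratic_form_antisym:
  fixes a :: "'i \<Rightarrow> real"
  assumes "finite L" "\<And>l m. l \<in> L \<Longrightarrow> m \<in> L \<Longrightarrow> l \<noteq> m \<Longrightarrow> T m l = - T l m"
  shows "(\<Sum>l\<in>L. \<Sum>m\<in>L. a l * a m * T l m) = (\<Sum>l\<in>L. (a l)\<^sup>2 * T l l)"
proof -
  let ?S = "\<Sum>l\<in>L. \<Sum>m\<in>L. a l * a m * T l m"
  have "?S = (\<Sum>l\<in>L. \<Sum>m\<in>L. a l * a m * T m l)"
    by (subst sum.swap) (simp add: mult.commute)
  then have "2 * ?S = (\<Sum>l\<in>L. \<Sum>m\<in>L. a l * a m * (T l m + T m l))"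
    by (simp add: distrib_left sum.distrib)
  also have "\<dots> = (\<Sum>l\<in>L. \<Sum>m\<in>L. if l = m then 2 * ((a l)\<^sup>2 * T l l) else 0)"
  proof (intro sum.cong refl)
    fix l m assume "l \<in> L" "m \<in> L"
    then show "a l * a m * (T l m + T m l) = (if l = m then 2 * ((a l)\<^sup>2 * T l l) else 0)"
      using assms(2)[of l m] by (cases "l = m") (simp_all add: power2_eq_square)
  qed
  also have "\<dots> = 2 * (\<Sum>l\<in>L. (a l)\<^sup>2 * T l l)"
    using assms(1) by (simp add: sum_distrib_left)
  finally show ?thesis by simp
qed

text \<open>The inner product of the coefficient vectors of \<open>e\<^sub>l c\<close> and \<open>e\<^sub>m c\<close>.\<close>

definition unit_mult_inner :: "nat \<Rightarrow> cl \<Rightarrow> nat \<Rightarrow> nat \<Rightarrow> real" where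
  "unit_mult_inner n c l m =
     (\<Sum>C\<in>Pow {1..n}. unit_sign l C * unit_sign m C * c (sym_diff {l} C) * c (sym_diff {m} C))"

lemma unit_mult_inner_diag:
  assumes "l \<in> {1..n}"
  shows "unit_mult_inner n c l l = (clnorm n c)\<^sup>2"
proof -
  have "unit_mult_inner n c l l = (\<Sum>C\<in>Pow {1..n}. (c (sym_diff C {l}))\<^sup>2)"
    unfolding unit_mult_inner_def by (intro sum.cong refl) (simp add: power2_eq_square Un_commute)
  also have "\<dots> = (clnorm n c)\<^sup>2"
    unfolding clnorm_power2 using assms by (intro sum_Pow_sym_diff) auto
  finally show ?thesis .
qed

lemma unit_mult_inner_swap:
  assumes lm: "l \<in> {1..n}" "m \<in> {1..n}" "l \<noteq> m"
  shows "unit_mult_inner n c m l = - unit_mult_inner n c l m"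
proof -
  let ?C' = "\<lambda>C. sym_diff C {l, m}"
  have "unit_mult_inner n c m l = (\<Sum>C\<in>Pow {1..n}. unit_sign m (?C' C) * unit_sign l (?C' C) *
      c (sym_diff {m} (?C' C)) * c (sym_diff {l} (?C' C)))"
    unfolding unit_mult_inner_def using lm by (intro sum_Pow_sym_diff[symmetric]) auto
  also have "\<dots> = (\<Sum>C\<in>Pow {1..n}.
      - (unit_sign l C * unit_sign m C * c (sym_diff {l} C) * c (sym_diff {m} C)))"
  proof (intro sum.cong refl)
    fix C assume "C \<in> Pow {1..n}"
    then have "finite C" using finite_subset by blast
    moreover have "sym_diff {m} (?C' C) = sym_diff {l} C" "sym_diff {l} (?C' C) = sym_diff {m} C"
      using lm by auto
    ultimately show "unit_sign m (?C' C) * unit_sign l (?C' C) *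
        c (sym_diff {m} (?C' C)) * c (sym_diff {l} (?C' C)) =
        - (unit_sign l C * unit_sign m C * c (sym_diff {l} C) * c (sym_diff {m} C))"
      using unit_sign_swap[OF lm(3)] by simp
  qed
  also have "\<dots> = - unit_mult_inner n c l m"
    unfolding unit_mult_inner_def by (simp add: sum_negf)
  finally show ?thesis .
qed

text \<open>Expanding \<open>|j c|\<^sup>2\<close> as a quadratic form in the coordinates of \<open>j\<close>, the cross terms
  cancel because distinct \<open>e\<^sub>l\<close> anticommute.\<close>

lemma clnorm_cl_mult_imag:
  assumes j: "j \<in> imag_sphere n"
  shows "clnorm n (cl_mult n j c) = clnorm n c"
proof -
  let ?P = "Pow {1..n}" and ?L = "{1..n}"
  define X where "X C l m = j {l} * j {m} *
      (unit_sign l C * unit_sign m C * c (sym_diff {l} C) * c (sym_diff {m} C))" for C l m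
  have "(clnorm n (cl_mult n j c))\<^sup>2 = (\<Sum>C\<in>?P. \<Sum>l\<in>?L. \<Sum>m\<in>?L. X C l m)"
    unfolding clnorm_power2 X_def
    by (intro sum.cong refl)
       (auto simp: cl_mult_imag_expand[OF j] power2_eq_square sum_product mult_ac)
  also have "\<dots> = (\<Sum>l\<in>?L. \<Sum>C\<in>?P. \<Sum>m\<in>?L. X C l m)"
    by (rule sum.swap)
  also have "\<dots> = (\<Sum>l\<in>?L. \<Sum>m\<in>?L. \<Sum>C\<in>?P. X C l m)"
    by (rule sum.cong[OF refl], rule sum.swap)
  also have "\<dots> = (\<Sum>l\<in>?L. \<Sum>m\<in>?L. j {l} * j {m} * unit_mult_inner n c l m)"
    by (simp only: X_def unit_mult_inner_def sum_distrib_left)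
  also have "\<dots> = (\<Sum>l\<in>?L. (j {l})\<^sup>2 * unit_mult_inner n c l l)"
    by (rule sum_quadratic_form_antisym[OF finite_atLeastAtMost unit_mult_inner_swap])
  also have "\<dots> = (\<Sum>l\<in>?L. (j {l})\<^sup>2) * (clnorm n c)\<^sup>2"
    by (simp add: unit_mult_inner_diag sum_distrib_right)
  also have "\<dots> = (clnorm n c)\<^sup>2"
    using j by (simp add: imag_sphere_def)
  finally show ?thesis
    by (simp add: clnorm_nonneg)
qed

section \<open>Slice coordinates of paravectors\<close>

definition vec_part :: "cl \<Rightarrow> cl" where
  "vec_part x = (\<lambda>C. if C = {} then 0 else x C)"

text \<open>The unit \<open>j\<close> with \<open>x = x\<^sub>0 + |x - x\<^sub>0| j\<close>; for real \<open>x\<close> any unit works, and \<open>e\<^sub>1\<close>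
  (which needs \<open>n \<ge> 1\<close>) is the choice made in \<^const>\<open>star_L\<close>.\<close>

definition slice_unit :: "nat \<Rightarrow> cl \<Rightarrow> cl" where
  "slice_unit n x = (if clnorm n (vec_part x) = 0 then cl_unit 1
                     else cl_scale (1 / clnorm n (vec_part x)) (vec_part x))"

definition para_conj :: "cl \<Rightarrow> cl" where
  "para_conj x = (\<lambda>C. if C = {} then x C else - x C)"

lemma clnorm_vec_part_power2:
  assumes "x \<in> paravec n"
  shows "(clnorm n (vec_part x))\<^sup>2 = (\<Sum>l\<in>{1..n}. (x {l})\<^sup>2)"
  unfolding clnorm_power2
  by (subst sum_Pow_singletons)
     (auto simp: vec_part_def paravec_coeff_eq_0[OF assms])

lemma vec_part_eq_0:
  assumes "x \<in> paravec n" "clnorm n (vec_part x) = 0"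
  shows "vec_part x = (\<lambda>C. 0)"
proof
  fix C
  show "vec_part x C = 0"
  proof (cases "C \<subseteq> {1..n}")
    case True
    have "(\<Sum>C\<in>Pow {1..n}. (vec_part x C)\<^sup>2) = 0"
      using assms(2) clnorm_power2[of n "vec_part x"] by simp
    then show ?thesis
      using True by (simp add: sum_nonneg_eq_0_iff)
  next
    case False
    then show ?thesis
      using assms(1) by (simp add: vec_part_def paravec_def cl_def)
  qed
qed

lemma cl_unit_1_in_imag_sphere:
  assumes "1 \<le> n"
  shows "cl_unit 1 \<in> imag_sphere n"
proof -
  have "(\<Sum>l = 1..n. (cl_unit 1 {l})\<^sup>2) = (\<Sum>l = 1..n. if l = 1 then 1 else 0)"
    by (intro sum.cong) (auto simp: cl_unit_def)
  then show ?thesis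
    using assms by (auto simp: imag_sphere_def paravec_def cl_def cl_unit_def)
qed

lemma slice_unit_in_imag_sphere:
  assumes "1 \<le> n" "x \<in> paravec n"
  shows "slice_unit n x \<in> imag_sphere n"
proof (cases "clnorm n (vec_part x) = 0")
  case True
  then show ?thesis
    using cl_unit_1_in_imag_sphere[OF assms(1)] by (simp add: slice_unit_def)
next
  case False
  let ?v = "clnorm n (vec_part x)"
  have "(\<Sum>l = 1..n. (1 / ?v * x {l})\<^sup>2) = (\<Sum>l = 1..n. (x {l})\<^sup>2) / ?v\<^sup>2"
    by (simp add: power_mult_distrib power_divide sum_divide_distrib)
  also have "\<dots> = 1"
    using False by (simp only: clnorm_vec_part_power2[OF assms(2), symmetric]) simp
  finally show ?thesis
    using False assms(2)
    by (auto simp: slice_unit_def imag_sphere_def paravec_def cl_def cl_scale_def vec_part_def)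
qed

lemma cl_scale_slice_unit:
  assumes "x \<in> paravec n"
  shows "cl_scale (clnorm n (vec_part x)) (slice_unit n x) = vec_part x"
  using vec_part_eq_0[OF assms] by (auto simp: slice_unit_def cl_scale_def)

lemma paravec_slice_coords:
  assumes "x \<in> paravec n"
  shows "cl_add (cl_scalar (x {})) (cl_scale (clnorm n (vec_part x)) (slice_unit n x)) = x"
  unfolding cl_scale_slice_unit[OF assms]
  by (auto simp: cl_add_def cl_scalar_def vec_part_def)

lemma para_conj_slice_coords:
  assumes "x \<in> paravec n"
  shows "cl_add (cl_scalar (x {})) (cl_scale (- clnorm n (vec_part x)) (slice_unit n x)) =
         para_conj x"
proof -
  have "cl_scale (- r) a C = - cl_scale r a C" for r a C
    by (simp add: cl_scale_def)
  then show ?thesis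
    using cl_scale_slice_unit[OF assms]
    by (auto simp: fun_eq_iff cl_add_def cl_scalar_def vec_part_def para_conj_def)
qed

lemma para_conj_in_paravec: "x \<in> paravec n \<Longrightarrow> para_conj x \<in> paravec n"
  by (auto simp: paravec_def cl_def para_conj_def)

lemma clnorm_para_conj [simp]: "clnorm n (para_conj x) = clnorm n x"
proof -
  have "(\<lambda>C. (para_conj x C)\<^sup>2) = (\<lambda>C. (x C)\<^sup>2)"
    by (simp add: fun_eq_iff para_conj_def)
  then show ?thesis
    unfolding clnorm_def by metis
qed

section \<open>Slice components and the star product\<close>

lemma slice_decomp_components:
  fixes u v :: real
  assumes sd: "slice_decomp n f f0 f1" and j: "j \<in> imag_sphere n"
  defines "xp \<equiv> cl_add (cl_scalar u) (cl_scale v j)"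
      and "xm \<equiv> cl_add (cl_scalar u) (cl_scale (- v) j)"
  shows "f0 u v = cl_scale (1 / 2) (cl_add (f xp) (f xm))"
    and "cl_mult n j (f1 u v) = cl_scale (1 / 2) (cl_sub (f xp) (f xm))"
proof -
  have plus: "f xp = cl_add (f0 u v) (cl_mult n j (f1 u v))"
    using sd j unfolding slice_decomp_def xp_def by blast
  have "f xm = cl_add (f0 u (- v)) (cl_mult n j (f1 u (- v)))"
    using sd j unfolding slice_decomp_def xm_def by blast
  moreover have "f0 u (- v) = f0 u v" "f1 u (- v) = (\<lambda>A. - f1 u v A)"
    using sd unfolding slice_decomp_def by auto
  ultimately have minus: "f xm A = f0 u v A - cl_mult n j (f1 u v) A" for A
    by (simp add: cl_add_def cl_mult_uminus_right)
  show "f0 u v = cl_scale (1 / 2) (cl_add (f xp) (f xm))"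
    "cl_mult n j (f1 u v) = cl_scale (1 / 2) (cl_sub (f xp) (f xm))"
    by (simp_all add: fun_eq_iff plus minus cl_scale_def cl_add_def cl_sub_def)
qed

lemma clnorm_slice_decomp_le:
  assumes sd: "slice_decomp n f f0 f1" and j: "j \<in> imag_sphere n"
    and plus: "clnorm n (f (cl_add (cl_scalar u) (cl_scale v j))) \<le> c"
    and minus: "clnorm n (f (cl_add (cl_scalar u) (cl_scale (- v) j))) \<le> c"
  shows "clnorm n (f0 u v) \<le> c" and "clnorm n (f1 u v) \<le> c"
proof -
  let ?p = "f (cl_add (cl_scalar u) (cl_scale v j))"
    and ?m = "f (cl_add (cl_scalar u) (cl_scale (- v) j))"
  show "clnorm n (f0 u v) \<le> c"
    unfolding slice_decomp_components(1)[OF sd j] clnorm_cl_scale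
    using clnorm_cl_add_le[of n ?p ?m] plus minus by simp
  have "clnorm n (f1 u v) = clnorm n (cl_mult n j (f1 u v))"
    using clnorm_cl_mult_imag[OF j] by simp
  also have "\<dots> \<le> c"
    unfolding slice_decomp_components(2)[OF sd j] clnorm_cl_scale
    using clnorm_cl_sub_le[of n ?p ?m] plus minus by simp
  finally show "clnorm n (f1 u v) \<le> c" .
qed

definition slice_eval :: "nat \<Rightarrow> (real \<Rightarrow> real \<Rightarrow> cl) \<Rightarrow> (real \<Rightarrow> real \<Rightarrow> cl) \<Rightarrow> cl \<Rightarrow> cl" where
  "slice_eval n h0 h1 x =
     cl_add (h0 (x {}) (clnorm n (vec_part x)))
            (cl_mult n (slice_unit n x) (h1 (x {}) (clnorm n (vec_part x))))"

definition star_even ::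
    "nat \<Rightarrow> (real \<Rightarrow> real \<Rightarrow> cl) \<Rightarrow> (real \<Rightarrow> real \<Rightarrow> cl) \<Rightarrow>
     (real \<Rightarrow> real \<Rightarrow> cl) \<Rightarrow> (real \<Rightarrow> real \<Rightarrow> cl) \<Rightarrow> real \<Rightarrow> real \<Rightarrow> cl" where
  "star_even n f0 f1 g0 g1 =
     (\<lambda>u v. cl_sub (cl_mult n (f0 u v) (g0 u v)) (cl_mult n (f1 u v) (g1 u v)))"

definition star_odd ::
    "nat \<Rightarrow> (real \<Rightarrow> real \<Rightarrow> cl) \<Rightarrow> (real \<Rightarrow> real \<Rightarrow> cl) \<Rightarrow>
     (real \<Rightarrow> real \<Rightarrow> cl) \<Rightarrow> (real \<Rightarrow> real \<Rightarrow> cl) \<Rightarrow> real \<Rightarrow> real \<Rightarrow> cl" where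
  "star_odd n f0 f1 g0 g1 =
     (\<lambda>u v. cl_add (cl_mult n (f1 u v) (g0 u v)) (cl_mult n (f0 u v) (g1 u v)))"

lemma star_L_eq_slice_eval:
  assumes "f \<in> SM_L n" "g \<in> SM_L n"
  obtains f0 f1 g0 g1 where "slice_decomp n f f0 f1" "slice_decomp n g g0 g1"
    "star_L n f g = slice_eval n (star_even n f0 f1 g0 g1) (star_odd n f0 f1 g0 g1)"
proof -
  define pf where "pf = (SOME p. slice_decomp n f (fst p) (snd p))"
  define pg where "pg = (SOME p. slice_decomp n g (fst p) (snd p))"
  have ex_f: "\<exists>p. slice_decomp n f (fst p) (snd p)" and ex_g: "\<exists>p. slice_decomp n g (fst p) (snd p)"
    using assms by (auto simp: SM_L_def)
  have "slice_decomp n f (fst pf) (snd pf)"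
    unfolding pf_def by (rule someI_ex[OF ex_f])
  moreover have "slice_decomp n g (fst pg) (snd pg)"
    unfolding pg_def by (rule someI_ex[OF ex_g])
  moreover have "star_L n f g = slice_eval n (star_even n (fst pf) (snd pf) (fst pg) (snd pg))
                                             (star_odd n (fst pf) (snd pf) (fst pg) (snd pg))"
    by (simp add: fun_eq_iff star_L_def slice_eval_def star_even_def star_odd_def
                  slice_unit_def vec_part_def pf_def pg_def Let_def case_prod_beta)
  ultimately show ?thesis using that by blast
qed

lemma slice_eval_slice_point:
  assumes j: "j \<in> imag_sphere n"
    and even: "\<And>u v A. h0 u (- v) A = h0 u v A" and odd: "\<And>u v A. h1 u (- v) A = - h1 u v A"
  shows "slice_eval n h0 h1 (cl_add (cl_scalar u) (cl_scale v j)) =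
         cl_add (h0 u v) (cl_mult n j (h1 u v))"
proof -
  let ?x = "cl_add (cl_scalar u) (cl_scale v j)"
  have "j {} = 0" using j by (simp add: imag_sphere_def)
  then have x0: "?x {} = u" and vec: "vec_part ?x = cl_scale v j"
    by (auto simp: fun_eq_iff cl_add_def cl_scalar_def cl_scale_def vec_part_def)
  have norm: "clnorm n (cl_scale v j) = \<bar>v\<bar>"
    unfolding clnorm_cl_scale clnorm_imag_sphere[OF j] by simp
  have eval: "slice_eval n h0 h1 ?x =
      cl_add (h0 u \<bar>v\<bar>) (cl_mult n (slice_unit n ?x) (h1 u \<bar>v\<bar>))"
    unfolding slice_eval_def x0 vec norm ..
  show ?thesis
  proof (cases v "0::real" rule: linorder_cases)
    case less
    have unit: "slice_unit n ?x = (\<lambda>C. - j C)"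
      unfolding slice_unit_def vec norm using less by (simp add: fun_eq_iff cl_scale_def)
    have parts: "h0 u \<bar>v\<bar> = h0 u v" "h1 u \<bar>v\<bar> = (\<lambda>A. - h1 u v A)"
      using less even odd by (auto simp: fun_eq_iff)
    show ?thesis
      unfolding eval unit parts
      by (simp add: fun_eq_iff cl_add_def cl_mult_uminus_left cl_mult_uminus_right)
  next
    case equal
    have "h1 u 0 = (\<lambda>A. 0)"
      using odd[of u 0] by (simp add: fun_eq_iff)
    then show ?thesis
      unfolding eval using equal by (simp add: cl_add_def cl_mult_zero_right)
  next
    case greater
    then have "slice_unit n ?x = j"
      unfolding slice_unit_def vec norm by (simp add: fun_eq_iff cl_scale_def)
    then show ?thesis
      using greater unfolding eval by simp
  qed
qed

section \<open>Smoothness of the star product\<close>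

definition has_C1_partials ::
    "(real \<Rightarrow> real \<Rightarrow> cl) \<Rightarrow> (real \<Rightarrow> real \<Rightarrow> cl) \<Rightarrow> (real \<Rightarrow> real \<Rightarrow> cl) \<Rightarrow> bool" where
  "has_C1_partials F Fu Fv \<longleftrightarrow> (\<forall>A.
     (\<forall>u v. ((\<lambda>t. F t v A) has_real_derivative Fu u v A) (at u) \<and>
            ((\<lambda>t. F u t A) has_real_derivative Fv u v A) (at v)) \<and>
     continuous_on UNIV (\<lambda>z. Fu (fst z) (snd z) A) \<and>
     continuous_on UNIV (\<lambda>z. Fv (fst z) (snd z) A))"

definition cauchy_riemann_C1 :: "(real \<Rightarrow> real \<Rightarrow> cl) \<Rightarrow> (real \<Rightarrow> real \<Rightarrow> cl) \<Rightarrow> bool" where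
  "cauchy_riemann_C1 f0 f1 \<longleftrightarrow>
     (\<exists>p0u p0v p1u p1v. has_C1_partials f0 p0u p0v \<and> has_C1_partials f1 p1u p1v \<and>
        (\<forall>A u v. p0u u v A = p1v u v A \<and> p0v u v A = - p1u u v A))"

lemma slice_decomp_iff:
  "slice_decomp n f f0 f1 \<longleftrightarrow>
     (\<forall>u v. f0 u v \<in> cl n \<and> f1 u v \<in> cl n) \<and>
     (\<forall>u v A. f0 u (- v) A = f0 u v A \<and> f1 u (- v) A = - f1 u v A) \<and>
     (\<forall>u v j. j \<in> imag_sphere n \<longrightarrow>
        f (cl_add (cl_scalar u) (cl_scale v j)) = cl_add (f0 u v) (cl_mult n j (f1 u v))) \<and>
     cauchy_riemann_C1 f0 f1"
  unfolding slice_decomp_def cauchy_riemann_C1_def has_C1_partials_def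
  by (simp add: all_conj_distrib conj_commute conj_left_commute)

lemma has_C1_partials_continuous:
  assumes "has_C1_partials F Fu Fv"
  shows "continuous_on UNIV (\<lambda>z. F (fst z) (snd z) A)"
proof (rule continuous_at_imp_continuous_on, intro ballI)
  fix z :: "real \<times> real"
  obtain x y where z: "z = (x, y)" by (cases z)
  have du: "((\<lambda>x. F x y A) has_derivative (*) (Fu x y A)) (at x within UNIV)"
    using assms by (simp add: has_C1_partials_def has_field_derivative_def)
  have dv: "((\<lambda>y. F x y A) has_derivative blinfun_apply (blinfun_scaleR_left (Fv x y A)))
      (at y within UNIV)" for x y
    using assms by (simp add: has_C1_partials_def has_field_derivative_def
                              mult.commute[of _ "Fv x y A"])
  have "isCont (\<lambda>z. Fv (fst z) (snd z) A) (x, y)"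
    using assms by (simp add: has_C1_partials_def continuous_on_eq_continuous_at)
  then have "continuous (at (x, y) within UNIV \<times> UNIV) (\<lambda>(x, y). blinfun_scaleR_left (Fv x y A))"
    by (simp add: case_prod_beta' bounded_linear.continuous[OF bounded_linear_blinfun_scaleR_left])
  then have "((\<lambda>(x, y). F x y A) has_derivative
      (\<lambda>(s, t). Fu x y A * s + blinfun_scaleR_left (Fv x y A) t)) (at (x, y) within UNIV \<times> UNIV)"
    by (intro has_derivative_partialsI[OF du dv]) auto
  then show "isCont (\<lambda>z. F (fst z) (snd z) A) z"
    unfolding z using has_derivative_continuous by (fastforce simp: case_prod_beta')
qed

lemma DERIV_cl_mult:
  assumes "\<And>A. ((\<lambda>t. a t A) has_real_derivative a' A) (at x)"
      and "\<And>B. ((\<lambda>t. b t B) has_real_derivative b' B) (at x)"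
  shows "((\<lambda>t. cl_mult n (a t) (b t) C) has_real_derivative
           cl_add (cl_mult n a' (b x)) (cl_mult n (a x) b') C) (at x)"
proof -
  have "((\<lambda>t. cl_mult n (a t) (b t) C) has_real_derivative
      (\<Sum>A\<in>Pow {1..n}. \<Sum>B\<in>Pow {1..n}.
         if sym_diff A B = C then cl_sign A B * (a' A * b x B + a x A * b' B) else 0)) (at x)"
    unfolding cl_mult_def
  proof (intro DERIV_sum)
    fix A B
    show "((\<lambda>t. if sym_diff A B = C then cl_sign A B * a t A * b t B else 0) has_real_derivative
        (if sym_diff A B = C then cl_sign A B * (a' A * b x B + a x A * b' B) else 0)) (at x)"
      using DERIV_cmult[OF DERIV_mult[OF assms], of "cl_sign A B" A B]
      by (simp add: mult_ac)
  qed
  also have "(\<Sum>A\<in>Pow {1..n}. \<Sum>B\<in>Pow {1..n}.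
         if sym_diff A B = C then cl_sign A B * (a' A * b x B + a x A * b' B) else 0) =
      cl_add (cl_mult n a' (b x)) (cl_mult n (a x) b') C"
    unfolding cl_add_def cl_mult_def sum.distrib[symmetric]
    by (intro sum.cong refl) (simp add: algebra_simps)
  finally show ?thesis .
qed

lemma continuous_on_cl_mult:
  assumes "\<And>A. continuous_on S (\<lambda>z. a z A)" "\<And>B. continuous_on S (\<lambda>z. b z B)"
  shows "continuous_on S (\<lambda>z. cl_mult n (a z) (b z) C)"
  unfolding cl_mult_def
proof (intro continuous_on_sum)
  fix A B
  show "continuous_on S (\<lambda>z. if sym_diff A B = C then cl_sign A B * a z A * b z B else 0)"
    by (cases "sym_diff A B = C") (auto intro!: continuous_on_mult continuous_on_const assms)
qed

lemma has_C1_partials_cl_add: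
  assumes "has_C1_partials F Fu Fv" "has_C1_partials G Gu Gv"
  shows "has_C1_partials (\<lambda>u v. cl_add (F u v) (G u v))
           (\<lambda>u v. cl_add (Fu u v) (Gu u v)) (\<lambda>u v. cl_add (Fv u v) (Gv u v))"
  using assms unfolding has_C1_partials_def cl_add_def
  by (auto intro!: DERIV_add continuous_on_add)

lemma has_C1_partials_cl_sub:
  assumes "has_C1_partials F Fu Fv" "has_C1_partials G Gu Gv"
  shows "has_C1_partials (\<lambda>u v. cl_sub (F u v) (G u v))
           (\<lambda>u v. cl_sub (Fu u v) (Gu u v)) (\<lambda>u v. cl_sub (Fv u v) (Gv u v))"
  using assms unfolding has_C1_partials_def cl_sub_def
  by (auto intro!: DERIV_diff continuous_on_diff)

lemma has_C1_partials_cl_mult: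
  assumes F: "has_C1_partials F Fu Fv" and G: "has_C1_partials G Gu Gv"
  shows "has_C1_partials (\<lambda>u v. cl_mult n (F u v) (G u v))
           (\<lambda>u v. cl_add (cl_mult n (Fu u v) (G u v)) (cl_mult n (F u v) (Gu u v)))
           (\<lambda>u v. cl_add (cl_mult n (Fv u v) (G u v)) (cl_mult n (F u v) (Gv u v)))"
  using has_C1_partials_continuous[OF F] has_C1_partials_continuous[OF G] F G
  unfolding has_C1_partials_def cl_add_def
  by (auto intro!: DERIV_cl_mult[unfolded cl_add_def] continuous_on_add continuous_on_cl_mult)

text \<open>Since \<open>f\<^sub>0 + i f\<^sub>1\<close> and \<open>g\<^sub>0 + i g\<^sub>1\<close> satisfy the Cauchy-Riemann system and
  \<open>i\<close> commutes with the Clifford coefficients, so does their product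
  \<open>(f\<^sub>0g\<^sub>0 - f\<^sub>1g\<^sub>1) + i (f\<^sub>1g\<^sub>0 + f\<^sub>0g\<^sub>1)\<close>.\<close>

lemma cauchy_riemann_C1_star:
  assumes "cauchy_riemann_C1 f0 f1" "cauchy_riemann_C1 g0 g1"
  shows "cauchy_riemann_C1 (star_even n f0 f1 g0 g1) (star_odd n f0 f1 g0 g1)"
proof -
  obtain a0u a0v a1u a1v where a: "has_C1_partials f0 a0u a0v" "has_C1_partials f1 a1u a1v"
    and CR_a: "\<forall>A u v. a0u u v A = a1v u v A \<and> a0v u v A = - a1u u v A"
    using assms(1) unfolding cauchy_riemann_C1_def by blast
  obtain b0u b0v b1u b1v where b: "has_C1_partials g0 b0u b0v" "has_C1_partials g1 b1u b1v"
    and CR_b: "\<forall>A u v. b0u u v A = b1v u v A \<and> b0v u v A = - b1u u v A"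
    using assms(2) unfolding cauchy_riemann_C1_def by blast
  have "has_C1_partials (star_even n f0 f1 g0 g1)
      (\<lambda>u v. cl_sub (cl_add (cl_mult n (a0u u v) (g0 u v)) (cl_mult n (f0 u v) (b0u u v)))
                    (cl_add (cl_mult n (a1u u v) (g1 u v)) (cl_mult n (f1 u v) (b1u u v))))
      (\<lambda>u v. cl_sub (cl_add (cl_mult n (a0v u v) (g0 u v)) (cl_mult n (f0 u v) (b0v u v)))
                    (cl_add (cl_mult n (a1v u v) (g1 u v)) (cl_mult n (f1 u v) (b1v u v))))"
    unfolding star_even_def by (intro has_C1_partials_cl_sub has_C1_partials_cl_mult a b)
  moreover have "has_C1_partials (star_odd n f0 f1 g0 g1)
      (\<lambda>u v. cl_add (cl_add (cl_mult n (a1u u v) (g0 u v)) (cl_mult n (f1 u v) (b0u u v)))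
                    (cl_add (cl_mult n (a0u u v) (g1 u v)) (cl_mult n (f0 u v) (b1u u v))))
      (\<lambda>u v. cl_add (cl_add (cl_mult n (a1v u v) (g0 u v)) (cl_mult n (f1 u v) (b0v u v)))
                    (cl_add (cl_mult n (a0v u v) (g1 u v)) (cl_mult n (f0 u v) (b1v u v))))"
    unfolding star_odd_def by (intro has_C1_partials_cl_add has_C1_partials_cl_mult a b)
  moreover have "a1v u v = a0u u v" "a0v u v = (\<lambda>A. - a1u u v A)"
    "b1v u v = b0u u v" "b0v u v = (\<lambda>A. - b1u u v A)" for u v
    using CR_a CR_b by (auto simp: fun_eq_iff)
  ultimately show ?thesis
    unfolding cauchy_riemann_C1_def
    by (intro exI conjI) (auto simp: cl_add_def cl_sub_def cl_mult_uminus_left cl_mult_uminus_right)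
qed

lemma slice_decomp_star:
  assumes sf: "slice_decomp n f f0 f1" and sg: "slice_decomp n g g0 g1"
  defines "h0 \<equiv> star_even n f0 f1 g0 g1" and "h1 \<equiv> star_odd n f0 f1 g0 g1"
  shows "slice_decomp n (slice_eval n h0 h1) h0 h1"
proof -
  have even_f: "f0 u (- v) = f0 u v" and odd_f: "f1 u (- v) = (\<lambda>A. - f1 u v A)"
    and even_g: "g0 u (- v) = g0 u v" and odd_g: "g1 u (- v) = (\<lambda>A. - g1 u v A)" for u v
    using sf sg unfolding slice_decomp_def by (auto simp: fun_eq_iff)
  have even_h: "h0 u (- v) A = h0 u v A" and odd_h: "h1 u (- v) A = - h1 u v A" for u v A
    unfolding h0_def h1_def star_even_def star_odd_def cl_add_def cl_sub_def
      even_f odd_f even_g odd_g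
    by (simp_all add: cl_mult_uminus_left cl_mult_uminus_right)
  have "h0 u v \<in> cl n \<and> h1 u v \<in> cl n" for u v
    unfolding h0_def h1_def star_even_def star_odd_def cl_def cl_add_def cl_sub_def
    by (simp add: cl_mult_outside)
  moreover have "slice_eval n h0 h1 (cl_add (cl_scalar u) (cl_scale v j)) =
      cl_add (h0 u v) (cl_mult n j (h1 u v))" if "j \<in> imag_sphere n" for u v j
    using that even_h odd_h by (rule slice_eval_slice_point)
  moreover have "cauchy_riemann_C1 h0 h1"
    using sf sg unfolding h0_def h1_def slice_decomp_iff by (blast intro: cauchy_riemann_C1_star)
  ultimately show ?thesis
    unfolding slice_decomp_iff using even_h odd_h by blast
qed

section \<open>The growth estimate\<close>

lemma paravec_nonempty: "paravec n \<noteq> {}"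
proof -
  have "(\<lambda>C. 0) \<in> paravec n" by (simp add: paravec_def cl_def)
  then show ?thesis by blast
qed

lemma A_weight_le_iff:
  "A_weight n \<rho> s h x \<le> c \<longleftrightarrow> clnorm n (h x) \<le> c * exp (s * clnorm n x powr \<rho> (clnorm n x))"
proof -
  have "A_weight n \<rho> s h x = clnorm n (h x) / exp (s * clnorm n x powr \<rho> (clnorm n x))"
    by (simp add: A_weight_def exp_minus divide_inverse)
  then show ?thesis
    by (simp add: pos_divide_le_eq)
qed

lemma clnorm_le_A_norm:
  assumes "h \<in> A_space n \<rho> s" "x \<in> paravec n"
  shows "clnorm n (h x) \<le> A_norm n \<rho> s h * exp (s * clnorm n x powr \<rho> (clnorm n x))"
proof -
  have "A_weight n \<rho> s h x \<le> A_norm n \<rho> s h"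
    unfolding A_norm_def using assms by (intro cSUP_upper) (auto simp: A_space_def)
  then show ?thesis by (simp add: A_weight_le_iff)
qed

lemma clnorm_slice_eval_star_le:
  assumes n: "1 \<le> n" and x: "x \<in> paravec n"
    and sf: "slice_decomp n f f0 f1" and sg: "slice_decomp n g g0 g1"
    and "clnorm n (f x) \<le> a" "clnorm n (f (para_conj x)) \<le> a"
    and "clnorm n (g x) \<le> b" "clnorm n (g (para_conj x)) \<le> b"
  shows "clnorm n (slice_eval n (star_even n f0 f1 g0 g1) (star_odd n f0 f1 g0 g1) x)
           \<le> 2 powr ((real n + 4) / 2) * a * b"
proof -
  define u where "u = x {}"
  define v where "v = clnorm n (vec_part x)"
  define K where "K = 2 powr (real n / 2)"
  have j: "slice_unit n x \<in> imag_sphere n"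
    using n x by (rule slice_unit_in_imag_sphere)
  note coords = paravec_slice_coords[OF x, folded u_def v_def]
    para_conj_slice_coords[OF x, folded u_def v_def]
  let ?a0 = "clnorm n (f0 u v)" and ?a1 = "clnorm n (f1 u v)"
    and ?b0 = "clnorm n (g0 u v)" and ?b1 = "clnorm n (g1 u v)"
  have a: "?a0 \<le> a" "?a1 \<le> a"
    using clnorm_slice_decomp_le[OF sf j] assms(5,6) by (simp_all add: coords)
  have b: "?b0 \<le> b" "?b1 \<le> b"
    using clnorm_slice_decomp_le[OF sg j] assms(7,8) by (simp_all add: coords)
  have "clnorm n (slice_eval n (star_even n f0 f1 g0 g1) (star_odd n f0 f1 g0 g1) x)
      \<le> clnorm n (star_even n f0 f1 g0 g1 u v) + clnorm n (star_odd n f0 f1 g0 g1 u v)"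
    using clnorm_cl_add_le clnorm_cl_mult_imag[OF j]
    by (metis slice_eval_def u_def v_def)
  also have "\<dots> \<le> (K * ?a0 * ?b0 + K * ?a1 * ?b1) + (K * ?a1 * ?b0 + K * ?a0 * ?b1)"
    unfolding star_even_def star_odd_def K_def
    by (intro add_mono order_trans[OF clnorm_cl_sub_le] order_trans[OF clnorm_cl_add_le]
              clnorm_cl_mult_le)
  also have "\<dots> = K * ((?a0 + ?a1) * (?b0 + ?b1))"
    by (simp add: algebra_simps)
  also have "\<dots> \<le> K * ((2 * a) * (2 * b))"
    using a b order_trans[OF clnorm_nonneg a(1)]
    by (intro mult_left_mono mult_mono) (auto simp: K_def intro: add_nonneg_nonneg clnorm_nonneg)
  also have "\<dots> = 2 powr ((real n + 4) / 2) * a * b"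
    by (simp add: K_def add_divide_distrib powr_add)
  finally show ?thesis .
qed

lemma A_weight_star_le:
  assumes n: "1 \<le> n" and x: "x \<in> paravec n"
    and f: "f \<in> A_space n \<rho> \<sigma>" and g: "g \<in> A_space n \<rho> \<tau>"
    and sf: "slice_decomp n f f0 f1" and sg: "slice_decomp n g g0 g1"
  shows "A_weight n \<rho> (\<sigma> + \<tau>) (slice_eval n (star_even n f0 f1 g0 g1) (star_odd n f0 f1 g0 g1)) x
           \<le> 2 powr ((real n + 4) / 2) * A_norm n \<rho> \<sigma> f * A_norm n \<rho> \<tau> g"
proof -
  define R where "R = clnorm n x powr \<rho> (clnorm n x)"
  have "clnorm n (slice_eval n (star_even n f0 f1 g0 g1) (star_odd n f0 f1 g0 g1) x)
      \<le> 2 powr ((real n + 4) / 2) * (A_norm n \<rho> \<sigma> f * exp (\<sigma> * R)) * (A_norm n \<rho> \<tau> g * exp (\<tau> * R))"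
    unfolding R_def
    using clnorm_le_A_norm[OF f x] clnorm_le_A_norm[OF f para_conj_in_paravec[OF x]]
      clnorm_le_A_norm[OF g x] clnorm_le_A_norm[OF g para_conj_in_paravec[OF x]]
    by (intro clnorm_slice_eval_star_le[OF n x sf sg]) simp_all
  then show ?thesis
    unfolding A_weight_le_iff R_def[symmetric] by (simp add: algebra_simps exp_add)
qed

theorem lemma3p13:
  fixes n :: nat and \<rho> :: "real \<Rightarrow> real" and \<sigma> \<tau> :: real and f g :: "cl \<Rightarrow> cl"
  assumes "1 \<le> n"
    and "proximate_order \<rho>"
    and "\<sigma> > 0" and "\<tau> > 0"
    and "f \<in> A_space n \<rho> \<sigma>" and "g \<in> A_space n \<rho> \<tau>"
  shows "star_L n f g \<in> A_space n \<rho> (\<sigma> + \<tau>) \<and>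
         A_norm n \<rho> (\<sigma> + \<tau>) (star_L n f g)
           \<le> 2 powr ((real n + 4) / 2) * A_norm n \<rho> \<sigma> f * A_norm n \<rho> \<tau> g"
proof -
  obtain f0 f1 g0 g1 where sf: "slice_decomp n f f0 f1" and sg: "slice_decomp n g g0 g1"
    and star: "star_L n f g = slice_eval n (star_even n f0 f1 g0 g1) (star_odd n f0 f1 g0 g1)"
    using star_L_eq_slice_eval assms(5,6) unfolding A_space_def by blast
  have weight: "A_weight n \<rho> (\<sigma> + \<tau>) (star_L n f g) x
      \<le> 2 powr ((real n + 4) / 2) * A_norm n \<rho> \<sigma> f * A_norm n \<rho> \<tau> g" if "x \<in> paravec n" for x
    unfolding star using assms(1) that assms(5,6) sf sg by (rule A_weight_star_le)
  then have "bdd_above (A_weight n \<rho> (\<sigma> + \<tau>) (star_L n f g) ` paravec n)"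
    by (rule bdd_aboveI2)
  then have "star_L n f g \<in> A_space n \<rho> (\<sigma> + \<tau>)"
    using slice_decomp_star[OF sf sg] unfolding A_space_def SM_L_def star by blast
  moreover have "A_norm n \<rho> (\<sigma> + \<tau>) (star_L n f g)
      \<le> 2 powr ((real n + 4) / 2) * A_norm n \<rho> \<sigma> f * A_norm n \<rho> \<tau> g"
    unfolding A_norm_def[of n \<rho> "\<sigma> + \<tau>"] using paravec_nonempty weight by (rule cSUP_least)
  ultimately show ?thesis ..
qed

end
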